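(* For integers $q\ge1$ and $i\ge0$, let $q!\gamma_i$ denote the coefficient of $n^{2q-i}$ in the polynomial $q!\,u_{\mathsf R}(q;n)=(n)_q^2$, so that $$q!\gamma_i=\sum_{k=0}^i s(q,q-k)\,s(q,q-(i-k)).$$ Then, as a function of $q$, $q!\gamma_i$ is a polynomial in $q$ of degree $2i$; it has the factor $(q)_{\lceil i/2\rceil+1}$; and its coefficient of $q^{2i}$ is $$\frac{1}{(2i)!}\sum_{k=0}^i\binom{2i}{2k}\sum_{r=0}^k(-1)^r\binom{2k}{k+r}S(k+r,r)\sum_{s=0}^{i-k}(-1)^s\binom{2(i-k)}{i-k+s}S(i-k+s,s),$$ whose sign is $(-1)^i$.
   Context: $u_{\mathsf R}(q;n)=q!\binom nq^2=\frac1{q!}(n)_q^2$ is the number of placements of $q$ unlabelled nonattacking rooks on an $n\times n$ board, where $(n)_q=n(n-1)\cdots(n-q+1)$ is the falling factorial. $s(q,j)$ denotes the (signed) Stirling number of the first kind, taken to be $0$ if $j<0$ or $j>q$, and $S(n,k)$ the Stirling number of the second kind. *)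

theory Defs
  imports "HOL-Computational_Algebra.Polynomial" "HOL-Combinatorics.Stirling"
begin

definition ffact_poly :: "nat \<Rightarrow> 'a::comm_ring_1 poly" where
  "ffact_poly m = (\<Prod>j<m. [:- of_nat j, 1:])"

definition qfact_gamma :: "nat \<Rightarrow> nat \<Rightarrow> int" where
  "qfact_gamma q i = (if i \<le> 2 * q then coeff ((ffact_poly q :: int poly) ^ 2) (2 * q - i) else 0)"

definition lead_gamma :: "nat \<Rightarrow> rat" where
  "lead_gamma i = (1 / fact (2 * i)) *
     (\<Sum>k = 0..i. of_nat ((2 * i) choose (2 * k)) *
        (\<Sum>r = 0..k. (-1) ^ r * of_nat ((2 * k) choose (k + r)) * of_nat (Stirling (k + r) r)) *
        (\<Sum>s = 0..i - k. (-1) ^ s * of_nat ((2 * (i - k)) choose (i - k + s)) *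
                         of_nat (Stirling (i - k + s) s)))"

end

theory Submission
  imports Defs
begin

text \<open>
  By the recurrence s(q+1, q+1-k) = s(q, q-k) - q s(q, q-k+1), the number s(q, q-k) arises
  from the constant 1 by k indefinite summations against a linear factor, so it is a polynomial
  in q of degree 2k with leading coefficient c_k = (-1)^k / (2^k k!), the Taylor coefficient of
  e^(-x/2). Hence q! gamma_i, the convolution of these polynomials, has degree 2i and leading
  coefficient sum c_k c_(i-k) = (-1)^i / i!. In the same way S(m, m-k) is a polynomial in m of
  degree 2k with top coefficient 1/(2^k k!); its 2k-th finite difference evaluates the inner
  sums in lead_gamma, which therefore also equals (-1)^i / i!. Finally, for
  2j \<le> i + 1 every term s(j, j-k) s(j, j-i+k) vanishes, since one of the indices exceeds j or
  equals j \<ge> 1, giving the roots 0, ..., \<lceil>i/2\<rceil>.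
\<close>

definition forward_diff :: "'a::comm_ring_1 poly \<Rightarrow> 'a poly" where
  "forward_diff Q = pcompose Q [:1, 1:] - Q"

lemma poly_forward_diff: "poly (forward_diff Q) x = poly Q (x + 1) - poly Q x"
  by (simp add: forward_diff_def poly_pcompose add.commute)

lemma forward_diff_add: "forward_diff (P + Q) = forward_diff P + forward_diff Q"
  by (simp add: forward_diff_def pcompose_add)

lemma coeff_one_plus_X_power: "coeff ([:1, 1:] ^ j) k = (of_nat (j choose k) :: 'a::comm_semiring_1)"
proof (cases "k \<le> j")
  case True
  then show ?thesis by (simp add: coeff_linear_poly_power)
next
  case False
  have "degree ([:1::'a, 1:] ^ j) \<le> j"
    by (rule order.trans[OF degree_power_le]) simp
  with False show ?thesis by (simp add: coeff_eq_0 binomial_eq_0)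
qed

lemma pcompose_shift_eq_sum:
  "pcompose Q [:1, 1:] = (\<Sum>j\<le>degree Q. smult (coeff Q j) ([:1, 1:] ^ j))"
  for Q :: "'a::comm_ring_1 poly"
  by (simp add: pcompose_altdef poly_altdef degree_map_poly coeff_map_poly)

lemma coeff_forward_diff:
  fixes Q :: "'a::comm_ring_1 poly"
  assumes "degree Q \<le> N"
  shows "coeff (forward_diff Q) k = (\<Sum>j = Suc k..N. coeff Q j * of_nat (j choose k))"
proof -
  have shift: "coeff (pcompose Q [:1, 1:]) k = (\<Sum>j\<le>N. coeff Q j * of_nat (j choose k))"
    unfolding pcompose_shift_eq_sum coeff_sum coeff_smult coeff_one_plus_X_power
    using assms by (intro sum.mono_neutral_left) (auto simp: coeff_eq_0)
  show ?thesis
  proof (cases "k \<le> N")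
    case True
    have "(\<Sum>j\<le>N. coeff Q j * of_nat (j choose k)) = (\<Sum>j = k..N. coeff Q j * of_nat (j choose k))"
      by (intro sum.mono_neutral_right) (auto simp: binomial_eq_0)
    also have "\<dots> = coeff Q k + (\<Sum>j = Suc k..N. coeff Q j * of_nat (j choose k))"
      using True by (simp add: sum.atLeast_Suc_atMost)
    finally show ?thesis using shift by (simp add: forward_diff_def)
  next
    case False
    then show ?thesis
      using shift assms by (simp add: forward_diff_def coeff_eq_0 binomial_eq_0)
  qed
qed

lemma degree_forward_diff_le: "degree Q \<le> Suc n \<Longrightarrow> degree (forward_diff Q) \<le> n"
  by (rule degree_le) (simp add: coeff_forward_diff)

lemma coeff_forward_diff_top:
  "degree Q \<le> Suc n \<Longrightarrow> coeff (forward_diff Q) n = of_nat (Suc n) * coeff Q (Suc n)"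
  by (simp add: coeff_forward_diff)

lemma forward_diff_monom_cancels_top:
  fixes f :: "'a::field_char_0 poly"
  assumes "degree f \<le> n"
  defines "g \<equiv> f - forward_diff (monom (coeff f n / of_nat (Suc n)) (Suc n))"
  shows "degree g \<le> n" and "coeff g n = 0"
proof -
  have "degree (monom (coeff f n / of_nat (Suc n)) (Suc n)) \<le> Suc n"
    by (rule degree_monom_le)
  from degree_forward_diff_le[OF this] coeff_forward_diff_top[OF this]
  show "degree g \<le> n" and "coeff g n = 0"
    using assms(1) by (auto simp: g_def intro: degree_diff_le simp del: of_nat_Suc)
qed

lemma exists_forward_diff_eq:
  fixes f :: "'a::field_char_0 poly"
  assumes "degree f \<le> n"
  shows "\<exists>F. forward_diff F = f \<and> degree F \<le> Suc n"
  using assms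
proof (induction n arbitrary: f)
  case 0
  define G where "G = monom (coeff f 0) 1"
  have "degree (f - forward_diff G) \<le> 0" "coeff (f - forward_diff G) 0 = 0"
    using forward_diff_monom_cancels_top[OF "0.prems"] by (simp_all add: G_def)
  then have "forward_diff G = f"
    by (metis degree_0_id eq_iff_diff_eq_0 le_zero_eq pCons_0_0 coeff_pCons_0)
  moreover have "degree G \<le> Suc 0" by (simp add: G_def degree_monom_le)
  ultimately show ?case by blast
next
  case (Suc n)
  define G where "G = monom (coeff f (Suc n) / of_nat (Suc (Suc n))) (Suc (Suc n))"
  have "degree (f - forward_diff G) \<le> Suc n" "coeff (f - forward_diff G) (Suc n) = 0"
    using forward_diff_monom_cancels_top[OF Suc.prems] by (simp_all add: G_def)
  then have "degree (f - forward_diff G) \<le> n"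
    by (metis le_SucE leading_coeff_0_iff le0 degree_0)
  then obtain F where "forward_diff F = f - forward_diff G" "degree F \<le> Suc n"
    using Suc.IH by blast
  then have "forward_diff (G + F) = f" "degree (G + F) \<le> Suc (Suc n)"
    by (auto simp: forward_diff_add G_def degree_monom_le intro!: degree_add_le)
  then show ?case by blast
qed

lemma polynomial_indefinite_sum:
  fixes f :: "'a::field_char_0 poly"
  assumes "degree f \<le> n"
  obtains F where "\<And>q. poly F (of_nat q) = (\<Sum>t<q. poly f (of_nat t))"
    and "degree F \<le> Suc n" and "coeff F (Suc n) = coeff f n / of_nat (Suc n)"
proof -
  obtain G where G: "forward_diff G = f" "degree G \<le> Suc n"
    using exists_forward_diff_eq[OF assms] by blast
  define F where "F = G - [:poly G 0:]"
  have "poly F (of_nat q) = (\<Sum>t<q. poly f (of_nat t))" for q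
  proof -
    have "(\<Sum>t<q. poly f (of_nat t)) = (\<Sum>t<q. poly G (of_nat (Suc t)) - poly G (of_nat t))"
      by (simp add: G(1)[symmetric] poly_forward_diff add.commute)
    also have "\<dots> = poly G (of_nat q) - poly G (of_nat 0)"
      by (rule sum_lessThan_telescope)
    finally show ?thesis by (simp add: F_def)
  qed
  moreover have "degree F \<le> Suc n"
    using G(2) by (auto simp: F_def intro: degree_diff_le)
  moreover have "coeff F (Suc n) = coeff f n / of_nat (Suc n)"
    using coeff_forward_diff_top[OF G(2)] by (simp add: F_def G(1) field_simps del: of_nat_Suc)
  ultimately show thesis using that by blast
qed

lemma polynomial_indefinite_sum_linear_factor:
  fixes P :: "'a::field_char_0 poly"
  assumes "degree P \<le> n"
  obtains F where "\<And>q. poly F (of_nat q) = (\<Sum>t<q. (of_nat t - a) * poly P (of_nat t))"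
    and "degree F \<le> Suc (Suc n)" and "coeff F (Suc (Suc n)) = coeff P n / of_nat (Suc (Suc n))"
proof -
  have lin: "[:- a, 1:] * P = pCons 0 P - smult a P"
    by (simp add: mult_pCons_left)
  have "degree ([:- a, 1:] * P) \<le> Suc n"
    unfolding lin using assms by (intro degree_diff_le) (auto intro: order.trans[OF degree_smult_le])
  then obtain F where F: "\<And>q. poly F (of_nat q) = (\<Sum>t<q. poly ([:- a, 1:] * P) (of_nat t))"
    "degree F \<le> Suc (Suc n)" "coeff F (Suc (Suc n)) = coeff ([:- a, 1:] * P) (Suc n) / of_nat (Suc (Suc n))"
    using polynomial_indefinite_sum by blast
  have "coeff ([:- a, 1:] * P) (Suc n) = coeff P n"
    unfolding lin using assms by (simp add: coeff_eq_0)
  with F show thesis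
    by (intro that[of F]) (simp_all add: algebra_simps del: of_nat_Suc)
qed

lemma alternating_binomial_sum_Suc:
  fixes g :: "nat \<Rightarrow> 'a::comm_ring_1"
  shows "(\<Sum>m\<le>Suc n. (-1)^m * of_nat (Suc n choose m) * g m)
       = - (\<Sum>m\<le>n. (-1)^m * of_nat (n choose m) * (g (Suc m) - g m))"
proof -
  let ?S = "\<lambda>g. \<Sum>m\<le>n. (-1)^m * of_nat (n choose m) * g m"
  have shifted: "?S g = g 0 - (\<Sum>m\<le>n. (-1)^m * of_nat (n choose Suc m) * g (Suc m))"
  proof -
    have "?S g = (\<Sum>m\<le>Suc n. (-1)^m * of_nat (n choose m) * g m)"
      by (simp add: binomial_eq_0)
    then show ?thesis by (subst (asm) sum.atMost_Suc_shift) (simp add: sum_negf)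
  qed
  have "(\<Sum>m\<le>Suc n. (-1)^m * of_nat (Suc n choose m) * g m)
      = g 0 - (\<Sum>m\<le>n. (-1)^m * of_nat (n choose Suc m) * g (Suc m)) - ?S (\<lambda>m. g (Suc m))"
    by (subst sum.atMost_Suc_shift) (simp add: sum.distrib sum_subtractf algebra_simps sum_negf)
  also have "\<dots> = ?S g - ?S (\<lambda>m. g (Suc m))"
    by (simp only: shifted)
  finally show ?thesis
    by (simp add: sum_subtractf algebra_simps)
qed

lemma alternating_binomial_sum_poly:
  fixes Q :: "'a::field_char_0 poly"
  assumes "degree Q \<le> n"
  shows "(\<Sum>m\<le>n. (-1)^m * of_nat (n choose m) * poly Q (of_nat m)) = (-1)^n * fact n * coeff Q n"
  using assms
proof (induction n arbitrary: Q)
  case 0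
  then show ?case by (auto elim!: degree_eq_zeroE)
next
  case (Suc n)
  have "(\<Sum>m\<le>Suc n. (-1)^m * of_nat (Suc n choose m) * poly Q (of_nat m))
      = - (\<Sum>m\<le>n. (-1)^m * of_nat (n choose m) * poly (forward_diff Q) (of_nat m))"
    by (subst alternating_binomial_sum_Suc) (simp add: poly_forward_diff add.commute)
  also have "\<dots> = - ((-1)^n * fact n * (of_nat (Suc n) * coeff Q (Suc n)))"
    using Suc.IH[OF degree_forward_diff_le[OF Suc.prems]] coeff_forward_diff_top[OF Suc.prems]
    by simp
  finally show ?case by (simp add: algebra_simps)
qed

definition Stirling_offset :: "nat \<Rightarrow> nat \<Rightarrow> rat" where
  "Stirling_offset k m = (if k \<le> m then of_nat (Stirling m (m - k)) else 0)"

lemma Stirling_offset_Suc_Suc: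
  "Stirling_offset (Suc k) (Suc m) = Stirling_offset (Suc k) m + (of_nat m - of_nat k) * Stirling_offset k m"
proof (cases "Suc k \<le> m")
  case True
  then obtain d where d: "m - k = Suc d" "m - Suc k = d"
    by (metis Suc_diff_Suc Suc_le_lessD)
  have "(of_nat m - of_nat k :: rat) = of_nat (Suc d)"
    using d True by (simp add: of_nat_diff[symmetric])
  with True d show ?thesis by (simp add: Stirling_offset_def algebra_simps)
qed (auto simp: Stirling_offset_def le_Suc_eq)

lemma Stirling_offset_sum:
  "Stirling_offset (Suc k) m = (\<Sum>t<m. (of_nat t - of_nat k) * Stirling_offset k t)"
  by (induction m) (simp_all add: Stirling_offset_Suc_Suc, simp add: Stirling_offset_def)

lemma Stirling_offset_polynomial:
  "\<exists>Q :: rat poly. (\<forall>m. poly Q (of_nat m) = Stirling_offset k m) \<and> degree Q \<le> 2 * k \<and>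
       coeff Q (2 * k) = 1 / (2 ^ k * fact k)"
proof (induction k)
  case 0
  show ?case by (intro exI[of _ 1]) (simp add: Stirling_offset_def)
next
  case (Suc k)
  then obtain Q where Q: "\<forall>m. poly Q (of_nat m) = Stirling_offset k m" "degree Q \<le> 2 * k"
    "coeff Q (2 * k) = 1 / (2 ^ k * fact k)" by blast
  obtain F where F: "\<And>m. poly F (of_nat m) = (\<Sum>t<m. (of_nat t - of_nat k) * poly Q (of_nat t))"
    "degree F \<le> Suc (Suc (2 * k))" "coeff F (Suc (Suc (2 * k))) = coeff Q (2 * k) / of_nat (Suc (Suc (2 * k)))"
    using polynomial_indefinite_sum_linear_factor[OF Q(2)] by blast
  have "coeff F (2 * Suc k) = 1 / (2 ^ k * fact k) / of_nat (2 * k + 2)"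
    using F(3) Q(3) by simp
  also have "\<dots> = 1 / (2 ^ Suc k * fact (Suc k))"
    by (simp add: field_simps)
  finally have "coeff F (2 * Suc k) = 1 / (2 ^ Suc k * fact (Suc k))" .
  with F Q(1) show ?case
    by (intro exI[of _ F]) (simp add: Stirling_offset_sum)
qed

text \<open>Taylor coefficients of e^(-x/2); their convolution square gives those of e^(-x).\<close>
definition exp_neg_half_coeff :: "nat \<Rightarrow> rat" where
  "exp_neg_half_coeff k = (-1) ^ k / (2 ^ k * fact k)"

lemma exp_neg_half_coeff_convolution:
  "(\<Sum>k\<le>i. exp_neg_half_coeff k * exp_neg_half_coeff (i - k)) = (-1) ^ i / fact i"
proof -
  have "exp_neg_half_coeff k * exp_neg_half_coeff (i - k) = (-1) ^ i / (2 ^ i * fact i) * of_nat (i choose k)"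
    if "k \<le> i" for k
  proof -
    have "(-1::rat) ^ k * (-1) ^ (i - k) = (-1) ^ i" "(2::rat) ^ k * 2 ^ (i - k) = 2 ^ i"
      using that by (simp_all flip: power_add)
    with that show ?thesis
      by (simp add: exp_neg_half_coeff_def binomial_fact field_simps)
  qed
  then have "(\<Sum>k\<le>i. exp_neg_half_coeff k * exp_neg_half_coeff (i - k))
      = (-1) ^ i / (2 ^ i * fact i) * of_nat (\<Sum>k\<le>i. i choose k)"
    by (simp add: sum_distrib_left)
  also have "\<dots> = (-1) ^ i / fact i"
    by (simp add: choose_row_sum)
  finally show ?thesis .
qed

lemma alternating_Stirling_sum:
  "(\<Sum>r = 0..k. (-1) ^ r * of_nat ((2 * k) choose (k + r)) * of_nat (Stirling (k + r) r) :: rat)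
     = fact (2 * k) * exp_neg_half_coeff k"
proof -
  obtain Q where Q: "\<forall>m. poly Q (of_nat m) = Stirling_offset k m" "degree Q \<le> 2 * k"
    "coeff Q (2 * k) = 1 / (2 ^ k * fact k)"
    using Stirling_offset_polynomial by blast
  have "(-1) ^ k * fact (2 * k) * exp_neg_half_coeff k
      = (\<Sum>m\<le>2 * k. (-1) ^ m * of_nat ((2 * k) choose m) * Stirling_offset k m)"
    using alternating_binomial_sum_poly[OF Q(2)] Q(1,3)
    by (simp add: exp_neg_half_coeff_def power_mult)
  also have "\<dots> = (\<Sum>m = k..2 * k. (-1) ^ m * of_nat ((2 * k) choose m) * Stirling_offset k m)"
    by (intro sum.mono_neutral_right) (auto simp: Stirling_offset_def)
  also have "\<dots> = (\<Sum>r = 0..k. (-1) ^ (k + r) * of_nat ((2 * k) choose (k + r)) * Stirling_offset k (k + r))"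
    using sum.shift_bounds_cl_nat_ivl[of "\<lambda>m. (-1) ^ m * of_nat ((2 * k) choose m) * Stirling_offset k m" 0 k k]
    by (simp add: mult_2 add.commute)
  also have "\<dots> = (-1) ^ k * (\<Sum>r = 0..k. (-1) ^ r * of_nat ((2 * k) choose (k + r)) * of_nat (Stirling (k + r) r))"
    by (simp add: sum_distrib_left Stirling_offset_def power_add mult_ac)
  finally show ?thesis
    by (simp add: power_mult_distrib)
qed

lemma lead_gamma_eq: "lead_gamma i = (-1) ^ i / fact i"
proof -
  have "lead_gamma i = (\<Sum>k = 0..i. exp_neg_half_coeff k * exp_neg_half_coeff (i - k))"
    unfolding lead_gamma_def alternating_Stirling_sum sum_distrib_left
  proof (intro sum.cong refl)
    fix k assume "k \<in> {0..i}"
    then have "(of_nat ((2 * i) choose (2 * k)) :: rat) = fact (2 * i) / (fact (2 * k) * fact (2 * (i - k)))"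
      by (simp add: binomial_fact diff_mult_distrib2)
    then show "1 / fact (2 * i) * (of_nat ((2 * i) choose (2 * k)) * (fact (2 * k) * exp_neg_half_coeff k)
        * (fact (2 * (i - k)) * exp_neg_half_coeff (i - k))) = exp_neg_half_coeff k * exp_neg_half_coeff (i - k)"
      by (simp add: field_simps)
  qed
  then show ?thesis
    by (simp add: atLeast0AtMost exp_neg_half_coeff_convolution)
qed

lemma ffact_poly_Suc: "ffact_poly (Suc q) = ffact_poly q * [:- of_nat q, 1:]"
  by (simp add: ffact_poly_def)

lemma ffact_poly_nonzero: "ffact_poly q \<noteq> (0 :: 'a::idom poly)"
  by (simp add: ffact_poly_def)

lemma degree_ffact_poly: "degree (ffact_poly q :: 'a::idom poly) = q"
  by (simp add: ffact_poly_def degree_prod_sum_eq)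

lemma ffact_poly_dvd_of_roots:
  fixes p :: "'a::{idom, ring_char_0} poly"
  assumes "\<forall>j<m. poly p (of_nat j) = 0"
  shows "ffact_poly m dvd p"
  using assms
proof (induction m)
  case 0
  then show ?case by (simp add: ffact_poly_def)
next
  case (Suc m)
  then obtain r where r: "p = ffact_poly m * r" by (auto elim: dvdE)
  have "poly (ffact_poly m) (of_nat m :: 'a) \<noteq> 0"
    by (simp add: ffact_poly_def poly_prod)
  moreover have "poly p (of_nat m) = 0"
    using Suc.prems by simp
  ultimately have "poly r (of_nat m) = 0"
    using r by simp
  then obtain r' where "r = [:- of_nat m, 1:] * r'"
    by (auto simp: poly_eq_0_iff_dvd elim: dvdE)
  with r have "p = ffact_poly (Suc m) * r'"
    by (simp only: ffact_poly_Suc mult.assoc)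
  then show ?case by simp
qed

text \<open>The signed Stirling number s(q, q - k), i.e. the coefficient of x^(q-k) in (x)_q.\<close>
definition ffact_coeff :: "nat \<Rightarrow> nat \<Rightarrow> int" where
  "ffact_coeff k q = coeff (reflect_poly (ffact_poly q)) k"

lemma ffact_coeff_Suc_right:
  "ffact_coeff k (Suc q) = ffact_coeff k q - of_nat q * (if k = 0 then 0 else ffact_coeff (k - 1) q)"
proof -
  have "reflect_poly [:- of_nat q, 1::int:] = [:1, - of_nat q:]"
    by (cases q) (simp_all add: reflect_poly_def)
  then have "reflect_poly (ffact_poly (Suc q) :: int poly)
      = reflect_poly (ffact_poly q) + pCons 0 (smult (- of_nat q) (reflect_poly (ffact_poly q)))"
    by (simp only: ffact_poly_Suc reflect_poly_mult) (simp add: mult_pCons_right)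
  then show ?thesis
    unfolding ffact_coeff_def by (cases k) simp_all
qed

lemma ffact_coeff_0_right: "ffact_coeff k 0 = (if k = 0 then 1 else 0)"
  by (simp add: ffact_coeff_def ffact_poly_def)

lemma ffact_coeff_0_left: "ffact_coeff 0 q = 1"
  by (induction q) (simp_all add: ffact_coeff_Suc_right ffact_coeff_0_right)

lemma ffact_coeff_eq_0: "q < k \<Longrightarrow> ffact_coeff k q = 0"
  by (induction q arbitrary: k) (simp_all add: ffact_coeff_Suc_right ffact_coeff_0_right)

lemma ffact_coeff_Suc_diag: "ffact_coeff (Suc q) (Suc q) = 0"
  by (induction q) (simp_all add: ffact_coeff_Suc_right ffact_coeff_0_right ffact_coeff_eq_0)

lemma ffact_coeff_Suc_left: "ffact_coeff (Suc k) q = - (\<Sum>t<q. of_nat t * ffact_coeff k t)"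
  by (induction q) (simp_all add: ffact_coeff_Suc_right ffact_coeff_0_right)

lemma qfact_gamma_eq_convolution:
  "qfact_gamma q i = (\<Sum>k\<le>i. ffact_coeff k q * ffact_coeff (i - k) q)"
proof (cases "i \<le> 2 * q")
  case True
  let ?F = "ffact_poly q :: int poly"
  have "(\<Sum>k\<le>i. ffact_coeff k q * ffact_coeff (i - k) q) = coeff (reflect_poly (?F ^ 2)) i"
    by (simp add: ffact_coeff_def power2_eq_square reflect_poly_mult coeff_mult)
  also have "\<dots> = qfact_gamma q i"
    using True by (simp add: qfact_gamma_def coeff_reflect_poly degree_power_eq
        degree_ffact_poly ffact_poly_nonzero)
  finally show ?thesis ..
next
  case False
  then have "ffact_coeff k q * ffact_coeff (i - k) q = 0" for k
    by (cases "q < k") (simp_all add: ffact_coeff_eq_0)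
  then have "(\<Sum>k\<le>i. ffact_coeff k q * ffact_coeff (i - k) q) = 0"
    by (intro sum.neutral) blast
  with False show ?thesis
    by (simp add: qfact_gamma_def)
qed

lemma ffact_coeff_polynomial:
  "\<exists>P :: rat poly. (\<forall>q. poly P (of_nat q) = of_int (ffact_coeff k q)) \<and> degree P \<le> 2 * k \<and>
       coeff P (2 * k) = exp_neg_half_coeff k"
proof (induction k)
  case 0
  show ?case by (intro exI[of _ 1]) (simp add: ffact_coeff_0_left exp_neg_half_coeff_def)
next
  case (Suc k)
  then obtain P where P: "\<forall>q. poly P (of_nat q) = of_int (ffact_coeff k q)" "degree P \<le> 2 * k"
    "coeff P (2 * k) = exp_neg_half_coeff k" by blast
  obtain F where F: "\<And>q. poly F (of_nat q) = (\<Sum>t<q. of_nat t * poly P (of_nat t))"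
    "degree F \<le> Suc (Suc (2 * k))" "coeff F (Suc (Suc (2 * k))) = coeff P (2 * k) / of_nat (Suc (Suc (2 * k)))"
    using polynomial_indefinite_sum_linear_factor[OF P(2), where a = 0] by auto
  have "coeff (- F) (2 * Suc k) = - exp_neg_half_coeff k / of_nat (2 * k + 2)"
    using F(3) P(3) by simp
  also have "\<dots> = exp_neg_half_coeff (Suc k)"
    by (simp add: exp_neg_half_coeff_def field_simps)
  finally have "coeff (- F) (2 * Suc k) = exp_neg_half_coeff (Suc k)" .
  with F P(1) show ?case
    by (intro exI[of _ "- F"]) (simp add: ffact_coeff_Suc_left)
qed

lemma qfact_gamma_polynomial:
  "\<exists>p :: rat poly. (\<forall>q. poly p (of_nat q) = of_int (qfact_gamma q i)) \<and> degree p = 2 * i \<and>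
       coeff p (2 * i) = (-1) ^ i / fact i"
proof -
  have "\<forall>k. \<exists>P. (\<forall>q. poly P (of_nat q) = of_int (ffact_coeff k q)) \<and> degree P \<le> 2 * k \<and>
      coeff P (2 * k) = exp_neg_half_coeff k"
    using ffact_coeff_polynomial by blast
  from choice[OF this] obtain P where P: "\<And>k q. poly (P k) (of_nat q) = of_int (ffact_coeff k q)"
    "\<And>k. degree (P k) \<le> 2 * k" "\<And>k. coeff (P k) (2 * k) = exp_neg_half_coeff k"
    by blast
  have deg_P: "degree (P k) = 2 * k" for k
    using P(2)[of k] le_degree[of "P k" "2 * k"] P(3)[of k]
    by (simp add: exp_neg_half_coeff_def)
  define p where "p = (\<Sum>k\<le>i. P k * P (i - k))"
  have "coeff p (2 * i) = (\<Sum>k\<le>i. exp_neg_half_coeff k * exp_neg_half_coeff (i - k))"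
    unfolding p_def coeff_sum
  proof (intro sum.cong refl)
    fix k assume "k \<in> {..i}"
    then have "2 * i = degree (P k) + degree (P (i - k))" by (simp add: deg_P)
    then show "coeff (P k * P (i - k)) (2 * i) = exp_neg_half_coeff k * exp_neg_half_coeff (i - k)"
      by (simp only: coeff_mult_degree_sum) (simp add: deg_P P(3))
  qed
  then have coeff_p: "coeff p (2 * i) = (-1) ^ i / fact i"
    by (simp add: exp_neg_half_coeff_convolution)
  have "degree p \<le> 2 * i"
    unfolding p_def by (intro degree_sum_le) (auto intro: order.trans[OF degree_mult_le] simp: deg_P)
  with coeff_p have "degree p = 2 * i"
    by (metis le_antisym le_degree divide_eq_0_iff fact_nonzero power_eq_0_iff zero_neq_neg_one)
  moreover have "poly p (of_nat q) = of_int (qfact_gamma q i)" for q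
    by (simp add: p_def poly_sum P(1) qfact_gamma_eq_convolution)
  ultimately show ?thesis
    using coeff_p by blast
qed

lemma qfact_gamma_eq_0:
  assumes "1 \<le> i" and "2 * j \<le> i + 1"
  shows "qfact_gamma j i = 0"
proof -
  have terms_zero: "ffact_coeff k j * ffact_coeff (i - k) j = 0" if "k \<le> i" for k
  proof (cases "j < k \<or> j < i - k")
    case True
    then show ?thesis by (auto simp: ffact_coeff_eq_0)
  next
    case False
    with assms that have "k = j \<or> i - k = j" and "j \<noteq> 0" by linarith+
    then show ?thesis
      using ffact_coeff_Suc_diag[of "j - 1"] by auto
  qed
  then show ?thesis
    unfolding qfact_gamma_eq_convolution by (intro sum.neutral) auto
qed

lemma nat_ceiling_half: "nat \<lceil>real i / 2\<rceil> = (i + 1) div 2"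
proof -
  have "\<lceil>real i / 2\<rceil> = - (- int i div 2)"
    using ceiling_divide_eq_div[of "int i" 2] by simp
  also have "\<dots> = int ((i + 1) div 2)"
    by presburger
  finally show ?thesis by simp
qed

theorem proposition6p1:
  fixes i :: nat
  assumes "i \<ge> 1"
  shows "\<exists>p :: rat poly.
           (\<forall>q::nat. q \<ge> 1 \<longrightarrow> poly p (of_nat q) = of_int (qfact_gamma q i)) \<and>
           degree p = 2 * i \<and>
           ffact_poly (nat \<lceil>real i / 2\<rceil> + 1) dvd p \<and>
           coeff p (2 * i) = lead_gamma i \<and>
           sgn (lead_gamma i) = (-1) ^ i"
proof -
  obtain p :: "rat poly" where p: "\<And>q. poly p (of_nat q) = of_int (qfact_gamma q i)"
    "degree p = 2 * i" "coeff p (2 * i) = (-1) ^ i / fact i"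
    using qfact_gamma_polynomial by blast
  have "ffact_poly (nat \<lceil>real i / 2\<rceil> + 1) dvd p"
  proof (rule ffact_poly_dvd_of_roots, intro allI impI)
    fix j assume "j < nat \<lceil>real i / 2\<rceil> + 1"
    then have "2 * j \<le> i + 1" by (simp add: nat_ceiling_half)
    then show "poly p (of_nat j) = 0"
      using qfact_gamma_eq_0[OF assms] by (simp add: p(1))
  qed
  moreover have "sgn (lead_gamma i) = (-1) ^ i"
    by (cases "even i") (auto simp: lead_gamma_eq sgn_divide)
  ultimately show ?thesis
    using p by (auto simp: lead_gamma_eq)
qed

end
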